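(* Let $p$ be a prime and $k\ge0$ an integer; put $f=2$ if $p=2$ and $f=1$ if $p>2$, and $d=f\cdot p^{2k}$. Let $r$ be a positive integer with $r\ge\lceil\sqrt{f d/2}\,\rceil$ such that, if $d>1$, then $p\nmid r$. Put $n=p^k r$ and $$a=2n+d=2p^kr+f p^{2k},\qquad b=2n+\frac{2n^2}{d}=2p^kr+\frac{2r^2}{f},\qquad c=b+d=2p^kr+\frac{2r^2}{f}+fp^{2k}.$$ Then $(a,b,c)$ is an IDPT. Moreover, every IDPT $(a,b,c)$ with $c-b=f\cdot p^{2k}$ arises in this way from some such $r$.
   Context: A Diophantine Pythagorean Triangle (DPT) is a triple $(a,b,c)$ of positive integers with $a<b<c$ and $a^2+b^2=c^2$. An IDPT is a DPT with $\gcd(a,b,c)=1$. $\lceil x\rceil$ is the smallest integer $\ge x$. *)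

theory Defs
  imports Complex_Main "HOL-Computational_Algebra.Primes"
begin

definition DPT :: "nat \<Rightarrow> nat \<Rightarrow> nat \<Rightarrow> bool" where
  "DPT a b c \<longleftrightarrow> 0 < a \<and> a < b \<and> b < c \<and> a^2 + b^2 = c^2"

definition IDPT :: "nat \<Rightarrow> nat \<Rightarrow> nat \<Rightarrow> bool" where
  "IDPT a b c \<longleftrightarrow> DPT a b c \<and> gcd (gcd a b) c = 1"

end

theory Submission
  imports Defs
begin

(* If c = b + d, then a^2 = d (2 b + d); hence a - d is even, say 2 n, and b = 2 n + 2 n^2 / d.
   Conversely every n with d dividing 2 n^2 yields a Pythagorean triple in this way.  For
   d = f p^(2k) that divisibility says precisely n = p^k r.  A common divisor of b and d divides
   a^2, so the triple is primitive iff gcd b d = 1, which for the prime power d means that p does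
   not divide r.  Finally a < b amounts to f d \<le> 2 r^2, where equality would give an isosceles
   right triangle with integer sides, impossible since 2 a^2 = c^2 has no positive solution. *)

lemma ceiling_sqrt_half_le_iff:
  fixes r m :: nat
  shows "int r \<ge> \<lceil>sqrt (real m / 2)\<rceil> \<longleftrightarrow> m \<le> 2 * r^2"
proof -
  have "int r \<ge> \<lceil>sqrt (real m / 2)\<rceil> \<longleftrightarrow> sqrt (real m / 2) \<le> sqrt ((real r)^2)"
    by (simp add: ceiling_le_iff)
  also have "\<dots> \<longleftrightarrow> real m / 2 \<le> (real r)^2"
    by (rule real_sqrt_le_iff)
  also have "\<dots> \<longleftrightarrow> real m \<le> real (2 * r^2)" by (simp add: mult.commute)
  also have "\<dots> \<longleftrightarrow> m \<le> 2 * r^2" by (rule of_nat_le_iff)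
  finally show ?thesis .
qed

lemma two_mul_square_eq_square_imp_zero:
  fixes x y :: nat
  assumes "2 * x^2 = y^2"
  shows "x = 0"
  using assms
proof (induction x arbitrary: y rule: less_induct)
  case (less x)
  then have "even (y^2)" by (metis dvd_triv_left)
  then obtain y' where y: "y = 2 * y'" by auto
  with less.prems have "x^2 = 2 * y'^2" by (simp add: power_mult_distrib)
  then have "even (x^2)" by simp
  then obtain x' where x: "x = 2 * x'" by auto
  with \<open>x^2 = 2 * y'^2\<close> have "2 * x'^2 = y'^2" by (simp add: power_mult_distrib)
  then have "x' < x \<Longrightarrow> x' = 0" using less.IH by blast
  with x show "x = 0" by linarith
qed

lemma pythagorean_leg_difference_iff:
  fixes a b d :: nat
  assumes "0 < d"
  shows "a^2 + b^2 = (b + d)^2 \<longleftrightarrow>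
         (\<exists>n. d dvd 2 * n^2 \<and> a = 2 * n + d \<and> b = 2 * n + 2 * n^2 div d)"
proof
  assume "a^2 + b^2 = (b + d)^2"
  then have a2: "a^2 = d^2 + 2 * b * d" by (simp add: power2_eq_square algebra_simps)
  then have "d \<le> a" by (simp add: power2_le_imp_le)
  then obtain t where a: "a = t + d" by (metis le_add_diff_inverse2)
  with a2 have t2: "t^2 + 2 * d * t = 2 * b * d" by (simp add: power2_eq_square algebra_simps)
  then have "even (t^2 + 2 * d * t)" by simp
  then obtain n where t: "t = 2 * n" by auto
  with t2 have bd: "b * d = 2 * n^2 + 2 * n * d" by (simp add: power2_eq_square algebra_simps)
  with assms have "2 * n \<le> b" by (metis le_add2 mult_le_cancel2)
  with bd have "2 * n^2 = (b - 2 * n) * d" by (simp add: diff_mult_distrib)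
  with assms \<open>2 * n \<le> b\<close> a t show "\<exists>n. d dvd 2 * n^2 \<and> a = 2 * n + d \<and> b = 2 * n + 2 * n^2 div d"
    by (intro exI[of _ n]) auto
next
  assume "\<exists>n. d dvd 2 * n^2 \<and> a = 2 * n + d \<and> b = 2 * n + 2 * n^2 div d"
  then obtain n m where "2 * n^2 = d * m" "a = 2 * n + d" "b = 2 * n + m"
    using assms by auto
  then show "a^2 + b^2 = (b + d)^2" by (simp add: power2_eq_square algebra_simps)
qed

lemma IDPT_leg_difference_iff:
  fixes a b d :: nat
  assumes pyth: "a^2 + b^2 = (b + d)^2"
  shows "IDPT a b (b + d) \<longleftrightarrow> 0 < a \<and> a < b \<and> 0 < d \<and> coprime b d"
proof -
  have "gcd (gcd a b) (b + d) = 1 \<longleftrightarrow> coprime b d"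
  proof
    assume gcd: "gcd (gcd a b) (b + d) = 1"
    define g where "g = gcd b d"
    text \<open>g divides d and 2 b + d, so g^2 divides their product a^2.\<close>
    have "a^2 = d * (2 * b + d)" using pyth by (simp add: power2_eq_square algebra_simps)
    then have "g^2 dvd a^2" unfolding g_def power2_eq_square by (simp add: mult_dvd_mono)
    then have "g dvd gcd (gcd a b) (b + d)" by (simp add: g_def)
    then show "coprime b d" using gcd by (simp add: g_def coprime_iff_gcd_eq_1)
  next
    assume "coprime b d"
    moreover have "gcd (gcd a b) (b + d) dvd gcd b d"
      by (metis dvd_add_right_iff gcd_dvd1 gcd_dvd2 gcd_greatest dvd_trans)
    ultimately show "gcd (gcd a b) (b + d) = 1" by simp
  qed
  with pyth show ?thesis by (auto simp: IDPT_def DPT_def)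
qed

lemma prime_power_dvd_two_mul_square_iff:
  fixes p k n :: nat
  assumes "prime p"
  defines "f \<equiv> if p = 2 then 2 else 1"
  shows "f * p^(2 * k) dvd 2 * n^2 \<longleftrightarrow> p^k dvd n"
proof -
  have "f * p^(2 * k) dvd 2 * n^2 \<longleftrightarrow> (p^k)^2 dvd n^2"
  proof (cases "p = 2")
    case False
    then have "coprime (p^(2 * k)) 2"
      using assms(1) by (metis prime_imp_power_coprime primes_dvd_imp_eq two_is_prime_nat coprime_commute)
    with False show ?thesis
      by (simp add: f_def coprime_dvd_mult_right_iff mult.commute power_mult)
  qed (simp add: f_def power_mult mult.commute)
  then show ?thesis by simp
qed

lemma coprime_leg_prime_power_iff:
  fixes p k r :: nat
  assumes p: "prime p"
  defines "f \<equiv> if p = 2 then 2 else 1"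
  defines "d \<equiv> f * p^(2 * k)"
  shows "coprime (2 * (p^k * r) + 2 * r^2 div f) d \<longleftrightarrow> (d > 1 \<longrightarrow> \<not> p dvd r)"
proof (cases "d = 1")
  case False
  let ?b = "2 * (p^k * r) + 2 * r^2 div f"
  define e where "e = 2 * k + (if p = 2 then 1 else 0)"
  have d: "d = p^e" by (simp add: d_def f_def e_def power_add)
  with False have e: "e \<noteq> 0" by auto
  with d p have "d > 1" by (meson one_less_power prime_gt_1_nat neq0_conv)
  have "coprime ?b p \<longleftrightarrow> \<not> p dvd ?b"
    using p by (meson coprime_commute coprime_common_divisor dvd_refl not_prime_unit prime_imp_coprime)
  with e have "coprime ?b d \<longleftrightarrow> \<not> p dvd ?b" by (simp add: d)
  also have "\<dots> \<longleftrightarrow> \<not> p dvd r"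
  proof (cases "p = 2")
    case True
    then show ?thesis by (simp add: f_def)
  next
    case False
    with e have "p dvd 2 * (p^k * r)" by (simp add: e_def)
    moreover have "\<not> p dvd 2" using False p by (metis primes_dvd_imp_eq two_is_prime_nat)
    ultimately show ?thesis
      using False p by (simp add: f_def dvd_add_right_iff prime_dvd_mult_iff prime_dvd_power_iff)
  qed
  finally show ?thesis using \<open>d > 1\<close> by blast
qed simp

lemma IDPT_prime_power_leg_difference_iff:
  fixes p k r :: nat
  assumes p: "prime p"
  defines "f \<equiv> if p = 2 then 2 else 1"
  defines "d \<equiv> f * p^(2 * k)"
  defines "n \<equiv> p^k * r"
  shows "IDPT (2 * n + d) (2 * n + 2 * n^2 div d) (2 * n + 2 * n^2 div d + d) \<longleftrightarrow>
         0 < r \<and> f * d \<le> 2 * r^2 \<and> (d > 1 \<longrightarrow> \<not> p dvd r)"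
proof -
  let ?a = "2 * n + d" and ?b = "2 * n + 2 * n^2 div d"
  have d0: "0 < d" and f0: "0 < f" using p by (simp_all add: d_def f_def prime_gt_0_nat)
  have "d dvd 2 * n^2"
    using prime_power_dvd_two_mul_square_iff[OF p] by (simp add: d_def f_def n_def)
  then have pyth: "?a^2 + ?b^2 = (?b + d)^2"
    using pythagorean_leg_difference_iff[OF d0] by blast
  have "2 * n^2 = 2 * r^2 * p^(2 * k)"
    by (simp add: n_def power_mult_distrib power_even_eq)
  then have b: "2 * n^2 div d = 2 * r^2 div f"
    using p by (simp add: d_def prime_gt_0_nat)
  have "?a \<noteq> ?b"
    using pyth d0 two_mul_square_eq_square_imp_zero[of ?a "?b + d"] by auto
  then have "?a < ?b \<longleftrightarrow> d \<le> 2 * r^2 div f"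
    by (auto simp: b)
  also have "\<dots> \<longleftrightarrow> f * d \<le> 2 * r^2"
    by (simp add: less_eq_div_iff_mult_less_eq[OF f0] mult.commute)
  finally have "?a < ?b \<longleftrightarrow> f * d \<le> 2 * r^2" .
  moreover have "f * d \<le> 2 * r^2 \<Longrightarrow> 0 < r" using d0 f0 by (cases r) auto
  moreover have "coprime ?b d \<longleftrightarrow> (d > 1 \<longrightarrow> \<not> p dvd r)"
    using coprime_leg_prime_power_iff[OF p, of k r, folded f_def d_def] unfolding b by (simp add: n_def)
  ultimately show ?thesis
    using IDPT_leg_difference_iff[OF pyth] d0 by auto
qed

theorem theorem4:
  fixes p k :: nat
  assumes "prime p"
  defines "f \<equiv> (if p = 2 then 2 else 1 :: nat)"
  defines "d \<equiv> f * p ^ (2 * k)"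
  shows "(\<forall>r::nat. 0 < r \<and> int r \<ge> \<lceil>sqrt (real (f * d) / 2)\<rceil> \<and> (d > 1 \<longrightarrow> \<not> p dvd r) \<longrightarrow>
            (let n = p ^ k * r; a = 2 * n + d; b = 2 * n + (2 * n ^ 2) div d; c = b + d
             in IDPT a b c))
       \<and> (\<forall>a b c :: nat. IDPT a b c \<and> c - b = d \<longrightarrow>
            (\<exists>r::nat. 0 < r \<and> int r \<ge> \<lceil>sqrt (real (f * d) / 2)\<rceil> \<and> (d > 1 \<longrightarrow> \<not> p dvd r) \<and>
               (let n = p ^ k * r in a = 2 * n + d \<and> b = 2 * n + (2 * n ^ 2) div d \<and> c = b + d)))"
proof -
  note param_iff = IDPT_prime_power_leg_difference_iff[OF assms(1), of k, folded f_def d_def]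
  have d0: "0 < d" using assms(1) by (simp add: d_def f_def prime_gt_0_nat)
  show ?thesis
    unfolding ceiling_sqrt_half_le_iff
  proof (intro conjI allI impI)
    fix r :: nat
    assume "0 < r \<and> f * d \<le> 2 * r^2 \<and> (d > 1 \<longrightarrow> \<not> p dvd r)"
    then show "let n = p ^ k * r; a = 2 * n + d; b = 2 * n + (2 * n ^ 2) div d; c = b + d
               in IDPT a b c"
      using param_iff by (simp add: Let_def)
  next
    fix a b c :: nat
    assume "IDPT a b c \<and> c - b = d"
    then have idpt: "IDPT a b (b + d)" and c: "c = b + d" by (auto simp: IDPT_def DPT_def)
    then have "a^2 + b^2 = (b + d)^2" by (simp add: IDPT_def DPT_def)
    then obtain n where "d dvd 2 * n^2" "a = 2 * n + d" "b = 2 * n + 2 * n^2 div d"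
      using pythagorean_leg_difference_iff[OF d0] by blast
    moreover obtain r where "n = p^k * r"
      using \<open>d dvd 2 * n^2\<close> prime_power_dvd_two_mul_square_iff[OF assms(1), of k, folded f_def d_def]
      by blast
    ultimately show "\<exists>r::nat. 0 < r \<and> f * d \<le> 2 * r^2 \<and> (d > 1 \<longrightarrow> \<not> p dvd r) \<and>
               (let n = p ^ k * r in a = 2 * n + d \<and> b = 2 * n + (2 * n ^ 2) div d \<and> c = b + d)"
      using idpt c param_iff[of r] by auto
  qed
qed

end
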